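(* Let $\Gamma=(V,E)$ be a finite connected undirected graph and let $(u_{ij})$ be the generators of $C(G_{aut}^+(\Gamma))$. Let $i,j,k,l\in V$ with $d(i,k)=d(j,l)=m$, let $p\neq j$ be a vertex with $d(p,l)=m$, and let $q$ be a vertex with $d(q,l)=s$ and $d(j,q)\neq d(q,p)$. Then $$u_{ij}\Big(\sum_{t\in V:\ d(t,j)=d(t,p)=m,\ d(t,q)=s}u_{kt}\Big)u_{ip}=0.$$ In particular, if $l$ is the only vertex $t$ satisfying $d(t,q)=s$, $d(t,j)=m$ and $d(t,p)=m$, then $u_{ij}u_{kl}u_{ip}=0$.
   Context: $\Gamma$ is a finite simple connected undirected graph on $V=\{1,\dots,n\}$, $d$ the graph distance. $C(G_{aut}^+(\Gamma))$ is the universal unital $C^*$-algebra generated by $u_{ij}$, $1\le i,j\le n$, with relations: (R1) $u_{ij}=u_{ij}^*=u_{ij}^2$; (R2) $\sum_{l} u_{il}=1=\sum_{l} u_{li}$ for all $i$; (R3) $u_{ij}u_{kl}=u_{kl}u_{ij}=0$ whenever exactly one of $(i,k)\in E$, $(j,l)\in E$ holds. *)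

theory Defs
  imports Complex_Main
begin

text \<open>Isabelle/HOL has no complex-vector-space class,
so complex scalar multiplication is an explicit operation cscale, compatible with the
inherited real scalar multiplication; adj is the involution.\<close>

class cstar_algebra = real_normed_algebra_1 + banach +
  fixes adj :: "'a \<Rightarrow> 'a"
    and cscale :: "complex \<Rightarrow> 'a \<Rightarrow> 'a"
  assumes cscale_one: "cscale 1 x = x"
    and cscale_assoc: "cscale a (cscale b x) = cscale (a * b) x"
    and cscale_add_left: "cscale (a + b) x = cscale a x + cscale b x"
    and cscale_add_right: "cscale a (x + y) = cscale a x + cscale a y"
    and cscale_of_real: "cscale (of_real r) x = scaleR r x"
    and cscale_mult_left: "cscale a (x * y) = cscale a x * y"
    and cscale_mult_right: "cscale a (x * y) = x * cscale a y"
    and norm_cscale: "norm (cscale a x) = cmod a * norm x"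
    and adj_adj: "adj (adj x) = x"
    and adj_add: "adj (x + y) = adj x + adj y"
    and adj_mult: "adj (x * y) = adj y * adj x"
    and adj_cscale: "adj (cscale a x) = cscale (cnj a) (adj x)"
    and cstar_identity: "norm (adj x * x) = norm x ^ 2"

definition vertices :: "nat \<Rightarrow> nat set" where
  "vertices n = {1..n}"

definition edge_rel :: "nat \<Rightarrow> (nat \<Rightarrow> nat \<Rightarrow> bool) \<Rightarrow> (nat \<times> nat) set" where
  "edge_rel n E = {(x, y). x \<in> vertices n \<and> y \<in> vertices n \<and> E x y}"

definition simple_connected_graph :: "nat \<Rightarrow> (nat \<Rightarrow> nat \<Rightarrow> bool) \<Rightarrow> bool" where
  "simple_connected_graph n E \<longleftrightarrow> n \<ge> 1 \<and>
     (\<forall>x y. E x y \<longrightarrow> E y x) \<and> (\<forall>x. \<not> E x x) \<and>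
     (\<forall>x\<in>vertices n. \<forall>y\<in>vertices n. (x, y) \<in> (edge_rel n E)\<^sup>*)"

definition gdist :: "nat \<Rightarrow> (nat \<Rightarrow> nat \<Rightarrow> bool) \<Rightarrow> nat \<Rightarrow> nat \<Rightarrow> nat" where
  "gdist n E x y = (LEAST m. (x, y) \<in> (edge_rel n E) ^^ m)"

definition qaut_relations ::
  "nat \<Rightarrow> (nat \<Rightarrow> nat \<Rightarrow> bool) \<Rightarrow> (nat \<Rightarrow> nat \<Rightarrow> 'a::cstar_algebra) \<Rightarrow> bool" where
  "qaut_relations n E u \<longleftrightarrow>
     (\<forall>i\<in>vertices n. \<forall>j\<in>vertices n. u i j = adj (u i j) \<and> u i j = u i j * u i j) \<and>
     (\<forall>i\<in>vertices n. (\<Sum>l\<in>vertices n. u i l) = 1 \<and> (\<Sum>l\<in>vertices n. u l i) = 1) \<and>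
     (\<forall>i\<in>vertices n. \<forall>j\<in>vertices n. \<forall>k\<in>vertices n. \<forall>l\<in>vertices n.
        (E i k \<noteq> E j l) \<longrightarrow> u i j * u k l = 0 \<and> u k l * u i j = 0)"

end

theory Submission
  imports Defs
begin

text \<open>
  The entries of a magic unitary preserve distances: u_ij u_kl = 0 whenever d(i,k) \<noteq> d(j,l).
  This follows by induction on d(i,k) from (R3) and the row sums, once one knows that distinct
  entries of a row are orthogonal. Consequently the sum of u_kt over the sphere d(t,q) = s equals
  the sum of u_aq over the sphere d(k,a) = s, and between u_ij and u_ip every u_aq is killed,
  since d(i,a) = d(j,q) and d(a,i) = d(q,p) cannot both hold. The terms of the first sphere
  outside the prescribed index set are killed by distance preservation alone.

  Orthogonality of a row is where the C*-norm enters. For P = u_ij the compression P u_il P is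
  minus a sum of further compressions; this puts P \<plusminus> y, with y a multiple of it, into the unit
  ball, and a projection is an extreme point of the unit ball of its corner. The latter is seen
  by filtering the binomial expansions of (P + z y)^n over z \<in> {\<plusminus>s, \<plusminus>is}: only the powers
  y^k with k \<equiv> 1 mod 4 survive, and for large n the linear term dominates.
\<close>

lemma adj_zero [simp]: "adj 0 = (0::'a::cstar_algebra)"
  by (metis add_cancel_right_right adj_add)

lemma adj_one [simp]: "adj 1 = (1::'a::cstar_algebra)"
  by (metis adj_adj adj_mult mult_1_left)

lemma adj_minus [simp]: "adj (- x) = - adj (x::'a::cstar_algebra)"
  by (metis adj_add adj_zero eq_neg_iff_add_eq_0)

lemma adj_diff [simp]: "adj (x - y) = adj x - adj (y::'a::cstar_algebra)"
  by (metis adj_add adj_minus diff_conv_add_uminus)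

lemma adj_scaleR [simp]: "adj (r *\<^sub>R x) = r *\<^sub>R adj (x::'a::cstar_algebra)"
  by (metis adj_cscale cscale_of_real complex_cnj_complex_of_real)

lemma cscale_zero_left [simp]: "cscale 0 (x::'a::cstar_algebra) = 0"
  by (metis cscale_of_real of_real_0 scaleR_zero_left)

lemma cscale_zero_right [simp]: "cscale a (0::'a::cstar_algebra) = 0"
  by (metis add_cancel_right_right cscale_add_right)

lemma cscale_minus_left: "cscale (- a) (x::'a::cstar_algebra) = - cscale a x"
  by (metis add.right_inverse add_eq_0_iff cscale_add_left cscale_zero_left)

lemma cscale_diff_left: "cscale (a - b) (x::'a::cstar_algebra) = cscale a x - cscale b x"
  by (metis cscale_add_left cscale_minus_left diff_conv_add_uminus)

lemma cscale_sum_right: "cscale a (\<Sum>k\<in>A. f k) = (\<Sum>k\<in>A. cscale a (f k::'a::cstar_algebra))"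
  by (induction A rule: infinite_finite_induct) (auto simp: cscale_add_right)

lemma cscale_power: "cscale z (x::'a::cstar_algebra) ^ k = cscale (z ^ k) (x ^ k)"
  by (induction k)
    (simp_all add: cscale_one flip: cscale_mult_left cscale_mult_right cscale_assoc,
     simp add: cscale_assoc mult.commute)

lemma of_nat_mult_cscale: "of_nat m * cscale a (x::'a::cstar_algebra) = cscale (of_nat m * a) x"
  by (metis cscale_assoc cscale_of_real of_real_of_nat_eq scaleR_conv_of_real)

lemma cscale_mult_cscale: "cscale a x * cscale b y = cscale (a * b) (x * (y::'a::cstar_algebra))"
  by (simp add: cscale_assoc mult.commute flip: cscale_mult_left cscale_mult_right)

definition projection :: "'a::cstar_algebra \<Rightarrow> bool" where
  "projection p \<longleftrightarrow> adj p = p \<and> p * p = p"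

lemma projection_one_minus: "projection p \<Longrightarrow> projection (1 - p)"
  by (auto simp: projection_def algebra_simps)

lemma norm_projection_le_one:
  assumes "projection p"
  shows "norm p \<le> 1"
proof -
  have "norm p ^ 2 = norm p"
    using cstar_identity[of p] assms by (simp add: projection_def)
  then show ?thesis
    by (cases "norm p = 0") (auto simp: power2_eq_square)
qed

lemma norm_compression_le_one:
  assumes "projection p" "projection q"
  shows "norm (p * q * p) \<le> 1"
proof -
  have "norm (p * q * p) \<le> norm p * norm q * norm p"
    by (metis mult_right_mono norm_ge_zero norm_mult_ineq order_trans)
  also have "\<dots> \<le> 1"
    using norm_projection_le_one[OF assms(1)] norm_projection_le_one[OF assms(2)]
    by (simp add: mult_le_one)
  finally show ?thesis .
qed

lemma norm_add_scaleR_le_one: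
  fixes e y :: "'a::real_normed_vector"
  assumes "norm (e + y) \<le> 1" "norm (e - y) \<le> 1" "\<bar>s\<bar> \<le> 1"
  shows "norm (e + s *\<^sub>R y) \<le> 1"
proof -
  have "((1 + s) / 2) *\<^sub>R (e + y) + ((1 - s) / 2) *\<^sub>R (e - y)
      = ((1 + s) / 2 + (1 - s) / 2) *\<^sub>R e + ((1 + s) / 2 - (1 - s) / 2) *\<^sub>R y"
    by (simp add: algebra_simps)
  then have "e + s *\<^sub>R y = ((1 + s) / 2) *\<^sub>R (e + y) + ((1 - s) / 2) *\<^sub>R (e - y)"
    by (simp add: field_simps)
  also have "norm \<dots> \<le> ((1 + s) / 2) * norm (e + y) + ((1 - s) / 2) * norm (e - y)"
    using assms(3) by (intro order_trans[OF norm_triangle_ineq]) simp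
  also have "\<dots> \<le> (1 + s) / 2 + (1 - s) / 2"
    using assms by (intro add_mono mult_left_le) auto
  finally show ?thesis by argo
qed

lemma one_add_power_binomial:
  "(1 + x) ^ n = (\<Sum>k\<le>n. of_nat (n choose k) * x ^ k :: 'a::ring_1)"
proof (induction n)
  case (Suc n)
  have "x * (1 + x) ^ n = (\<Sum>k\<le>n. of_nat (n choose k) * x ^ Suc k)"
    unfolding Suc.IH sum_distrib_left
    by (intro sum.cong refl) (simp only: mult.assoc mult_of_nat_commute power_Suc)
  then have "(1 + x) ^ Suc n = (\<Sum>k\<le>n. of_nat (n choose k) * x ^ k) + (\<Sum>k\<le>n. of_nat (n choose k) * x ^ Suc k)"
    by (simp add: Suc.IH distrib_right)
  also have "(\<Sum>k\<le>n. of_nat (n choose k) * x ^ Suc k)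
      = (\<Sum>k\<le>Suc n. of_nat (if k = 0 then 0 else n choose (k - 1)) * x ^ k)"
    by (subst sum.atMost_Suc_shift) simp
  also have "(\<Sum>k\<le>n. of_nat (n choose k) * x ^ k) = (\<Sum>k\<le>Suc n. of_nat (n choose k) * x ^ k)"
    by (simp add: binomial_eq_0)
  also have "(\<Sum>k\<le>Suc n. of_nat (n choose k) * x ^ k)
      + (\<Sum>k\<le>Suc n. of_nat (if k = 0 then 0 else n choose (k - 1)) * x ^ k)
      = (\<Sum>k\<le>Suc n. of_nat (Suc n choose k) * x ^ k)"
    unfolding sum.distrib[symmetric] distrib_right[symmetric] of_nat_add[symmetric]
    by (intro sum.cong refl) (auto simp: gr0_conv_Suc add.commute)
  finally show ?case .
qed simp

lemma corner_power:
  fixes e x :: "'a::ring_1"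
  assumes "e * e = e" "e * x = x" "x * e = x" "n \<ge> 1"
  shows "(e + x) ^ n = e * (1 + x) ^ n"
  using assms(4)
proof (induction n rule: dec_induct)
  case (step n)
  have "(e + x) ^ Suc n = e * (1 + x) * (e * (1 + x) ^ n)"
    using step.IH assms(2) by (simp add: distrib_left)
  also have "\<dots> = e * (1 + x) ^ Suc n"
    using assms(1,2,3) by (simp add: algebra_simps mult.assoc[symmetric])
  finally show ?case .
qed (use assms(2) in \<open>simp add: distrib_left\<close>)

lemma norm_corner_add_imaginary_le_one:
  fixes e y :: "'a::cstar_algebra"
  assumes e: "projection e" and y: "adj y = y" "e * y = y" "y * e = y"
    and bounds: "norm (e + y) \<le> 1" "norm (e - y) \<le> 1" and s: "\<bar>s\<bar> \<le> 1"
  shows "norm (e + cscale (\<i> * of_real s) y) \<le> 1"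
proof -
  let ?w = "cscale (\<i> * of_real s) y"
  have ee: "e * e = e" "adj e = e" using e by (simp_all add: projection_def)
  have "adj ?w = - ?w"
    by (simp add: adj_cscale y cscale_minus_left flip: cscale_minus_left)
  moreover have "?w * ?w = - ((s * s) *\<^sub>R (y * y))"
  proof -
    have "\<i> * of_real s * (\<i> * of_real s) = - complex_of_real (s * s)"
      by (simp add: algebra_simps)
    then show ?thesis
      by (simp only: cscale_mult_cscale cscale_minus_left cscale_of_real)
  qed
  moreover have "e * ?w = ?w" "?w * e = ?w"
    by (simp_all add: y flip: cscale_mult_left cscale_mult_right)
  ultimately have square: "adj (e + ?w) * (e + ?w) = e + (s * s) *\<^sub>R (y * y)"
    by (simp add: adj_add ee algebra_simps)
  have "(e + s *\<^sub>R y) * (e + s *\<^sub>R y) + (e + (- s) *\<^sub>R y) * (e + (- s) *\<^sub>R y)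
      = (e + (s * s) *\<^sub>R (y * y)) + (e + (s * s) *\<^sub>R (y * y))"
    by (simp add: algebra_simps ee y)
  then have average: "e + (s * s) *\<^sub>R (y * y)
      = (1/2) *\<^sub>R ((e + s *\<^sub>R y) * (e + s *\<^sub>R y) + (e + (- s) *\<^sub>R y) * (e + (- s) *\<^sub>R y))"
    by (simp only: scaleR_half_double)
  have square_le: "norm (x * x) \<le> 1" if "norm x \<le> 1" for x :: 'a
    using that by (meson mult_le_one norm_ge_zero norm_mult_ineq order_trans)
  have "norm (e + (s * s) *\<^sub>R (y * y))
      \<le> (1/2) * (norm ((e + s *\<^sub>R y) * (e + s *\<^sub>R y)) + norm ((e + (- s) *\<^sub>R y) * (e + (- s) *\<^sub>R y)))"
    unfolding average by (simp add: norm_triangle_ineq)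
  also have "\<dots> \<le> 1"
    using square_le[OF norm_add_scaleR_le_one[OF bounds, of s]]
      square_le[OF norm_add_scaleR_le_one[OF bounds, of "- s"]] s
    by simp
  finally have "norm (e + (s * s) *\<^sub>R (y * y)) \<le> 1" .
  then have "norm (e + ?w) ^ 2 \<le> 1"
    using cstar_identity[of "e + ?w"] square by simp
  then show ?thesis
    by (simp add: power_le_one_iff)
qed

lemma power_filter_mod_4:
  "(1/4) * (z ^ k - (- z) ^ k) + (- \<i> / 4) * ((\<i> * z) ^ k - (- \<i> * z) ^ k)
    = (if k mod 4 = 1 then z ^ k else 0)"
proof -
  obtain q r where k: "k = 4 * q + r" and r: "r < 4"
    by (metis mod_less_divisor div_mult_mod_eq mult.commute zero_less_numeral)
  have periodic: "(-1 :: complex) ^ k = (-1) ^ r" "\<i> ^ k = \<i> ^ r" "(- \<i>) ^ k = (- \<i>) ^ r"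
    unfolding k power_add power_mult by simp_all
  have powers: "(- z) ^ k = (-1) ^ k * z ^ k" "(- \<i> * z) ^ k = (- \<i>) ^ k * z ^ k"
      "(\<i> * z) ^ k = \<i> ^ k * z ^ k"
    by (metis mult_minus1 power_mult_distrib) (simp_all only: power_mult_distrib)
  have "(1/4) * (z ^ k - (- z) ^ k) + (- \<i> / 4) * ((\<i> * z) ^ k - (- \<i> * z) ^ k)
      = z ^ k * ((1/4) * (1 - (-1) ^ r) + (- \<i> / 4) * (\<i> ^ r - (- \<i>) ^ r))"
    unfolding powers periodic by algebra
  also have "\<dots> = (if k mod 4 = 1 then z ^ k else 0)"
  proof -
    have "r = 0 \<or> r = 1 \<or> r = 2 \<or> r = 3" "k mod 4 = r"
      using k r by auto
    then show ?thesis
      by (auto simp: numeral_3_eq_3 numeral_2_eq_2 algebra_simps)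
  qed
  finally show ?thesis .
qed

lemma one_add_cscale_power:
  "(1 + cscale z y) ^ n = (\<Sum>k\<le>n. cscale (of_nat (n choose k) * z ^ k) (y ^ k :: 'a::cstar_algebra))"
  by (simp add: one_add_power_binomial cscale_power of_nat_mult_cscale)

lemma one_add_cscale_power_filter_mod_4:
  fixes y :: "'a::cstar_algebra"
  shows "cscale (1/4) ((1 + cscale (of_real s) y) ^ n - (1 + cscale (- of_real s) y) ^ n)
      + cscale (- \<i> / 4) ((1 + cscale (\<i> * of_real s) y) ^ n - (1 + cscale (- (\<i> * of_real s)) y) ^ n)
    = (\<Sum>k\<le>n. if k mod 4 = 1 then (real (n choose k) * s ^ k) *\<^sub>R y ^ k else 0)"
    (is "?lhs = _")
proof -
  let ?c = "complex_of_real s"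
  have "?lhs = (\<Sum>k\<le>n. cscale (of_nat (n choose k) * ((1/4) * (?c ^ k - (- ?c) ^ k)
      + (- \<i> / 4) * ((\<i> * ?c) ^ k - (- \<i> * ?c) ^ k))) (y ^ k))"
    unfolding one_add_cscale_power
    by (simp add: cscale_sum_right cscale_assoc flip: sum_subtractf sum.distrib cscale_diff_left cscale_add_left)
      (simp add: algebra_simps)
  also have "\<dots> = (\<Sum>k\<le>n. if k mod 4 = 1 then (real (n choose k) * s ^ k) *\<^sub>R y ^ k else 0)"
    unfolding power_filter_mod_4
  proof (intro sum.cong refl)
    fix k
    have "of_nat (n choose k) * ?c ^ k = complex_of_real (real (n choose k) * s ^ k)"
      by simp
    then show "cscale (of_nat (n choose k) * (if k mod 4 = 1 then ?c ^ k else 0)) (y ^ k)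
        = (if k mod 4 = 1 then (real (n choose k) * s ^ k) *\<^sub>R y ^ k else 0)"
      by (simp add: cscale_of_real del: of_real_mult of_real_power of_real_of_nat_eq)
  qed
  finally show ?thesis .
qed

lemma norm_corner_filtered_binomial_le_one:
  fixes e y :: "'a::cstar_algebra"
  assumes e: "projection e" and y: "adj y = y" "e * y = y" "y * e = y"
    and bounds: "norm (e + y) \<le> 1" "norm (e - y) \<le> 1" and s: "\<bar>s\<bar> \<le> 1" and n: "n \<ge> 1"
  shows "norm (\<Sum>k\<le>n. if k mod 4 = 1 then (real (n choose k) * s ^ k) *\<^sub>R y ^ k else 0) \<le> 1"
    (is "norm ?G \<le> 1")
proof -
  define Q where "Q z = (e + cscale z y) ^ n" for z
  let ?c = "complex_of_real s"
  have Q_le: "norm (Q ?c) \<le> 1" "norm (Q (- ?c)) \<le> 1"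
      "norm (Q (\<i> * ?c)) \<le> 1" "norm (Q (- (\<i> * ?c))) \<le> 1"
  proof -
    have "norm ((e + x) ^ n) \<le> 1" if "norm (e + x) \<le> 1" for x
      by (metis norm_ge_zero norm_power_ineq order_trans power_le_one that)
    moreover have "cscale ?c y = s *\<^sub>R y" "cscale (- ?c) y = (- s) *\<^sub>R y"
      by (simp_all add: cscale_of_real flip: of_real_minus)
    moreover have "- (\<i> * ?c) = \<i> * complex_of_real (- s)"
      by simp
    ultimately show "norm (Q ?c) \<le> 1" "norm (Q (- ?c)) \<le> 1"
        "norm (Q (\<i> * ?c)) \<le> 1" "norm (Q (- (\<i> * ?c))) \<le> 1"
      using s unfolding Q_def
      by (metis abs_minus_cancel norm_add_scaleR_le_one[OF bounds]
          norm_corner_add_imaginary_le_one[OF e y bounds])+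
  qed
  have diff_le: "norm (Q z - Q (- z)) \<le> 2" if "norm (Q z) \<le> 1" "norm (Q (- z)) \<le> 1" for z
    using that norm_triangle_ineq4[of "Q z" "Q (- z)"] by simp
  have "Q z = e * (1 + cscale z y) ^ n" for z
    unfolding Q_def using e n
    by (intro corner_power) (simp_all add: y projection_def flip: cscale_mult_left cscale_mult_right)
  then have "e * ?G = cscale (1/4) (Q ?c - Q (- ?c)) + cscale (- \<i> / 4) (Q (\<i> * ?c) - Q (- (\<i> * ?c)))"
    unfolding one_add_cscale_power_filter_mod_4[symmetric]
    by (simp add: distrib_left right_diff_distrib flip: cscale_mult_right)
  also have "norm \<dots> \<le> (1/4) * 2 + (1/4) * 2"
    using diff_le[OF Q_le(1,2)] diff_le[OF Q_le(3,4)]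
    by (intro order_trans[OF norm_triangle_ineq] add_mono) (simp_all add: norm_cscale)
  also have "e * ?G = ?G"
  proof -
    have "e * y ^ k = y ^ k" if "k \<ge> 1" for k
      using that y(2) by (induction k rule: dec_induct) (simp_all add: mult.assoc[symmetric])
    then show ?thesis
      by (simp add: sum_distrib_left if_distrib) (intro sum.cong refl, simp)
  qed
  finally show ?thesis by simp
qed

lemma sum_two_power_div_fact_le: "(\<Sum>k = 5..N. 2 ^ k / fact k) \<le> (2/5 :: real)"
proof -
  have bound: "(\<Sum>k = 5..N. 2 ^ k / fact k) + 3/2 * 2 ^ Suc N / fact (Suc N) \<le> (2/5 :: real)"
    if "N \<ge> 4" for N
    using that
  proof (induction N rule: dec_induct)
    case base
    then show ?case by (simp add: fact_numeral)
  next
    case (step N)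
    have "3/2 * 2 ^ Suc (Suc N) / fact (Suc (Suc N)) = (3 / real (Suc (Suc N))) * (2 ^ Suc N / fact (Suc N))"
      by (simp add: field_simps)
    also have "\<dots> \<le> (1/2) * (2 ^ Suc N / fact (Suc N) :: real)"
      using step(1) by (intro mult_right_mono) (auto simp: field_simps)
    finally show ?case
      using step by simp
  qed
  show ?thesis
  proof (cases "N \<ge> 4")
    case True
    have "0 \<le> 3/2 * 2 ^ Suc N / (fact (Suc N) :: real)"
      by simp
    then show ?thesis
      using bound[OF True] by linarith
  qed simp
qed

lemma projection_extreme_point:
  fixes e y :: "'a::cstar_algebra"
  assumes e: "projection e" and y: "adj y = y" "e * y = y" "y * e = y"
    and bounds: "norm (e + y) \<le> 1" "norm (e - y) \<le> 1"
  shows "y = 0"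
proof (rule ccontr)
  assume "y \<noteq> 0"
  define \<delta> where "\<delta> = norm y"
  have \<delta>: "\<delta> > 0" using \<open>y \<noteq> 0\<close> by (simp add: \<delta>_def)
  obtain n :: nat where n: "2 / \<delta> < real n"
    using reals_Archimedean2 by blast
  then have n_large: "2 < real n * \<delta>"
    using \<delta> by (simp add: field_simps)
  then have n_pos: "n \<ge> 1"
    by (cases n) auto
  \<comment> \<open>With n s \<parallel>y\<parallel> = 2 the linear term has norm 2, the higher ones contribute at most 2/5.\<close>
  define s where "s = 2 / (real n * \<delta>)"
  have s: "0 < s" "s \<le> 1" "s * \<delta> = 2 / real n"
    using \<delta> n_pos n_large by (auto simp: s_def)
  define f where "f k = (if k mod 4 = 1 then (real (n choose k) * s ^ k) *\<^sub>R y ^ k else 0)" for k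
  have sum_le: "norm (\<Sum>k\<le>n. f k) \<le> 1"
    unfolding f_def using norm_corner_filtered_binomial_le_one[OF e y bounds _ n_pos, of s] s
    by simp
  have split: "(\<Sum>k\<le>n. f k) = f 1 + (\<Sum>k\<in>{..n} - {1}. f k)"
    using n_pos by (subst sum.remove[of _ 1]) auto
  have linear_term: "norm (f 1) = 2"
    using s n_pos \<delta> by (simp add: f_def \<delta>_def[symmetric] s_def)
  have higher_term: "norm (f k) \<le> (if 5 \<le> k then 2 ^ k / fact k else 0)"
    if "k \<noteq> 1" for k
  proof (cases "k mod 4 = 1")
    case True
    then have "k \<ge> 5" using that by presburger
    have "norm (f k) \<le> real (n choose k) * s ^ k * \<delta> ^ k"
      using True s by (simp add: f_def \<delta>_def norm_power_ineq mult_left_mono)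
    also have "\<dots> = real (n choose k) * (2 / real n) ^ k"
      by (simp add: mult.assoc s(3) flip: power_mult_distrib)
    also have "\<dots> \<le> 2 ^ k / fact k"
    proof -
      have "real (n choose k) * fact k \<le> real n ^ k"
        using binomial_fact_pow[of n k] by (metis of_nat_fact of_nat_le_iff of_nat_mult of_nat_power)
      then show ?thesis
        using n_pos by (simp add: field_simps)
    qed
    finally show ?thesis using \<open>k \<ge> 5\<close> by simp
  qed (simp add: f_def)
  have "norm (\<Sum>k\<in>{..n} - {1}. f k) \<le> (\<Sum>k\<in>{..n} - {1}. if 5 \<le> k then 2 ^ k / fact k else 0)"
    by (intro order_trans[OF norm_sum sum_mono] higher_term) simp
  also have "\<dots> = (\<Sum>k = 5..n. 2 ^ k / fact k)"
    by (simp add: sum.inter_filter[symmetric]) (intro sum.cong; auto)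
  also have "\<dots> \<le> 2/5"
    by (rule sum_two_power_div_fact_le)
  finally have "norm (\<Sum>k\<in>{..n} - {1}. f k) \<le> 2/5" .
  then show False
    using sum_le linear_term norm_triangle_ineq4[of "\<Sum>k\<le>n. f k" "\<Sum>k\<in>{..n} - {1}. f k"]
    unfolding split by simp
qed

lemma projection_mult_eq_zero_if_compression_eq_zero:
  fixes p q :: "'a::cstar_algebra"
  assumes p: "projection p" and q: "projection q" and pqp: "p * q * p = 0"
  shows "p * q = 0"
proof -
  have "adj (q * p) * (q * p) = p * q * p"
    using p q by (simp add: projection_def adj_mult mult.assoc flip: mult.assoc[of q q])
  then have "q * p = 0"
    using cstar_identity[of "q * p"] pqp by simp
  then show ?thesis
    using p q by (metis adj_mult adj_zero projection_def)
qed

lemma projections_sum_one_orthogonal: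
  fixes p :: "'b \<Rightarrow> 'a::cstar_algebra"
  assumes fin: "finite S" and proj: "\<And>l. l \<in> S \<Longrightarrow> projection (p l)"
    and sum_one: "(\<Sum>l\<in>S. p l) = 1" and ab: "a \<in> S" "b \<in> S" "a \<noteq> b"
  shows "p a * p b = 0"
proof (rule projection_mult_eq_zero_if_compression_eq_zero)
  let ?P = "p a"
  let ?c = "?P * p b * ?P"
  define R where "R = S - {a, b}"
  have P: "projection ?P" and PP: "?P * ?P = ?P" and adj_P: "adj ?P = ?P"
    using proj[OF ab(1)] by (simp_all add: projection_def)
  show "projection ?P" "projection (p b)"
    using proj ab by simp_all
  have decomp: "(\<Sum>l\<in>S. p l) = ?P + p b + (\<Sum>l\<in>R. p l)"
    using fin ab unfolding R_def
    by (simp add: sum.remove[of S a] sum.remove[of "S - {a}" b] add.assoc flip: Diff_insert2)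
  have "?P = ?P * (\<Sum>l\<in>S. p l) * ?P"
    using sum_one PP by simp
  also have "\<dots> = ?P + ?c + (\<Sum>l\<in>R. ?P * p l * ?P)"
    unfolding decomp by (simp add: distrib_left distrib_right sum_distrib_left sum_distrib_right PP)
  finally have c_eq: "?c = - (\<Sum>l\<in>R. ?P * p l * ?P)"
    by (simp add: add.assoc add_eq_0_iff)
  show "?c = 0"
  proof (cases "R = {}")
    case False
    define r where "r = real (card R)"
    have r: "r \<ge> 1"
      using False fin by (simp add: r_def R_def Suc_le_eq card_gt_0_iff)
    \<comment> \<open>P + y and P - y are convex combinations of compressions P q P of projections q.\<close>
    define y where "y = (1 / r) *\<^sub>R ?c"
    have y: "adj y = y" "?P * y = y" "y * ?P = y"
      using proj[OF ab(2)] adj_P PP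
      by (simp_all add: y_def projection_def adj_mult mult.assoc flip: mult.assoc[of ?P ?P])
    have "?P + y = (1 / r) *\<^sub>R (\<Sum>l\<in>R. ?P * (1 - p l) * ?P)"
      using r unfolding y_def c_eq r_def
      by (simp add: algebra_simps PP sum_subtractf sum_constant_scaleR del: sum_constant)
    moreover have "norm (\<Sum>l\<in>R. ?P * (1 - p l) * ?P) \<le> r"
    proof -
      have "norm (\<Sum>l\<in>R. ?P * (1 - p l) * ?P) \<le> (\<Sum>l\<in>R. norm (?P * (1 - p l) * ?P))"
        by (rule norm_sum)
      also have "\<dots> \<le> (\<Sum>l\<in>R. 1)"
        using proj by (intro sum_mono norm_compression_le_one[OF P] projection_one_minus) (simp add: R_def)
      finally show ?thesis
        by (simp add: r_def)
    qed
    ultimately have "norm (?P + y) \<le> 1"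
      using r by (simp add: field_simps)
    moreover have "norm (?P - y) \<le> 1"
    proof -
      have "?P - y = (1 - 1 / r) *\<^sub>R ?P + (1 / r) *\<^sub>R (?P * (1 - p b) * ?P)"
        by (simp add: y_def algebra_simps PP)
      also have "norm \<dots> \<le> (1 - 1 / r) * norm ?P + (1 / r) * norm (?P * (1 - p b) * ?P)"
        using r by (intro order_trans[OF norm_triangle_ineq]) simp
      also have "\<dots> \<le> (1 - 1 / r) * 1 + (1 / r) * 1"
        using r norm_projection_le_one[OF P]
          norm_compression_le_one[OF P projection_one_minus[OF proj[OF ab(2)]]]
        by (intro add_mono mult_left_mono) simp_all
      finally show ?thesis by simp
    qed
    ultimately have "y = 0"
      using projection_extreme_point[OF P y] by simp
    then show ?thesis
      using r by (simp add: y_def)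
  qed (simp add: c_eq)
qed

lemma finite_vertices [simp]: "finite (vertices n)"
  by (simp add: vertices_def)

lemma sym_relpow:
  assumes "sym R"
  shows "sym (R ^^ m)"
proof (induction m)
  case (Suc m)
  show ?case
  proof (rule symI)
    fix x y
    assume "(x, y) \<in> R ^^ Suc m"
    then obtain z where "(x, z) \<in> R ^^ m" "(z, y) \<in> R"
      by auto
    then show "(y, x) \<in> R ^^ Suc m"
      using Suc.IH assms by (meson relpow_Suc_I2 symD)
  qed
qed (simp add: sym_Id)

locale connected_graph =
  fixes n :: nat and E :: "nat \<Rightarrow> nat \<Rightarrow> bool"
  assumes graph: "simple_connected_graph n E"
begin

abbreviation "V \<equiv> vertices n"
abbreviation "d \<equiv> gdist n E"

lemma sym_edge_rel: "sym (edge_rel n E)"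
  using graph by (auto simp: sym_def edge_rel_def simple_connected_graph_def)

lemma walk_of_gdist:
  assumes "x \<in> V" "y \<in> V"
  shows "(x, y) \<in> edge_rel n E ^^ d x y"
proof -
  obtain m where "(x, y) \<in> edge_rel n E ^^ m"
    using graph assms unfolding simple_connected_graph_def rtrancl_power by blast
  then show ?thesis
    unfolding gdist_def by (rule LeastI)
qed

lemma gdist_le_walk: "(x, y) \<in> edge_rel n E ^^ m \<Longrightarrow> d x y \<le> m"
  unfolding gdist_def by (rule Least_le)

lemma gdist_eq_0_iff: "x \<in> V \<Longrightarrow> y \<in> V \<Longrightarrow> d x y = 0 \<longleftrightarrow> x = y"
  using walk_of_gdist[of x y] gdist_le_walk[of x y 0] by auto

lemma gdist_commute: "x \<in> V \<Longrightarrow> y \<in> V \<Longrightarrow> d x y = d y x"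
  using walk_of_gdist sym_relpow[OF sym_edge_rel] gdist_le_walk
  by (meson antisym symD)

lemma gdist_le_Suc_neighbour:
  "(x, x') \<in> edge_rel n E \<Longrightarrow> x' \<in> V \<Longrightarrow> y \<in> V \<Longrightarrow> d x y \<le> Suc (d x' y)"
  using gdist_le_walk relpow_Suc_I2 walk_of_gdist by metis

lemma gdist_SucE:
  assumes "x \<in> V" "y \<in> V" "d x y = Suc r"
  obtains x' where "x' \<in> V" "E x x'" "d x' y = r"
proof -
  obtain x' where x': "(x, x') \<in> edge_rel n E" "(x', y) \<in> edge_rel n E ^^ r"
    using walk_of_gdist[OF assms(1,2)] assms(3) by (metis relpow_Suc_D2)
  then have "x' \<in> V" "E x x'"
    by (auto simp: edge_rel_def)
  moreover have "d x' y = r"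
    using gdist_le_walk[OF x'(2)] gdist_le_Suc_neighbour[OF x'(1) \<open>x' \<in> V\<close> assms(2)] assms(3)
    by simp
  ultimately show thesis
    using that by blast
qed

end

lemma qaut_relations_transpose: "qaut_relations n E u \<Longrightarrow> qaut_relations n E (\<lambda>a b. u b a)"
  unfolding qaut_relations_def by (simp add: ball_conj_distrib)

locale quantum_automorphism = connected_graph +
  fixes u :: "nat \<Rightarrow> nat \<Rightarrow> 'a::cstar_algebra"
  assumes relations: "qaut_relations n E u"
begin

lemma projection_entry: "i \<in> V \<Longrightarrow> j \<in> V \<Longrightarrow> projection (u i j)"
  using relations by (simp add: qaut_relations_def projection_def)

lemma row_sum: "i \<in> V \<Longrightarrow> (\<Sum>l\<in>V. u i l) = 1"
  using relations by (simp add: qaut_relations_def)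

lemma column_sum: "j \<in> V \<Longrightarrow> (\<Sum>l\<in>V. u l j) = 1"
  using relations by (simp add: qaut_relations_def)

lemma mult_eq_zero_if_adjacency_differs:
  "i \<in> V \<Longrightarrow> j \<in> V \<Longrightarrow> k \<in> V \<Longrightarrow> l \<in> V \<Longrightarrow> E i k \<noteq> E j l \<Longrightarrow> u i j * u k l = 0"
  using relations by (simp add: qaut_relations_def)

lemma row_orthogonal: "i \<in> V \<Longrightarrow> j \<in> V \<Longrightarrow> l \<in> V \<Longrightarrow> j \<noteq> l \<Longrightarrow> u i j * u i l = 0"
  by (rule projections_sum_one_orthogonal[of V]) (simp_all add: projection_entry row_sum)

lemma mult_eq_zero_if_gdist_less:
  "i \<in> V \<Longrightarrow> j \<in> V \<Longrightarrow> k \<in> V \<Longrightarrow> l \<in> V \<Longrightarrow> d i k < d j l \<Longrightarrow> u i j * u k l = 0"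
proof (induction "d i k" arbitrary: i j)
  case 0
  then show ?case
    using row_orthogonal gdist_eq_0_iff by (metis less_nat_zero_code)
next
  case (Suc r)
  obtain i' where i': "i' \<in> V" "E i i'" "d i' k = r"
    using gdist_SucE Suc.prems(1,3) Suc.hyps(2) by metis
  have "u i j * u i' j' * u k l = 0" if j': "j' \<in> V" for j'
  proof (cases "E j j'")
    case False
    then show ?thesis
      using mult_eq_zero_if_adjacency_differs[of i j i' j'] Suc.prems i' j' by simp
  next
    case True
    then have "d j l \<le> Suc (d j' l)"
      using gdist_le_Suc_neighbour Suc.prems j' by (simp add: edge_rel_def)
    then have "u i' j' * u k l = 0"
      using Suc.hyps(1)[of i' j'] Suc.hyps(2) Suc.prems i' j' by simp
    then show ?thesis
      by (simp add: mult.assoc)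
  qed
  then have "(\<Sum>j'\<in>V. u i j * u i' j' * u k l) = 0"
    by simp
  then show ?case
    by (simp add: row_sum[OF i'(1)] flip: sum_distrib_left sum_distrib_right)
qed

end

sublocale quantum_automorphism \<subseteq> transpose: quantum_automorphism n E "\<lambda>a b. u b a"
  by unfold_locales (rule qaut_relations_transpose[OF relations])

context quantum_automorphism
begin

lemma mult_eq_zero_if_gdist_differs:
  assumes "i \<in> V" "j \<in> V" "k \<in> V" "l \<in> V" "d i k \<noteq> d j l"
  shows "u i j * u k l = 0"
proof (cases "d i k < d j l")
  case False
  then have "d j l < d i k"
    using assms(5) by simp
  then show ?thesis
    using transpose.mult_eq_zero_if_gdist_less[OF assms(2,1,4,3)] by simp
qed (use mult_eq_zero_if_gdist_less assms in blast)

lemma sum_row_sphere_eq_sum_column_sphere: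
  assumes k: "k \<in> V" and q: "q \<in> V"
  shows "(\<Sum>t\<in>{t\<in>V. d t q = s}. u k t) = (\<Sum>a\<in>{a\<in>V. d k a = s}. u a q)"
proof -
  let ?T = "{t\<in>V. d t q = s}" and ?A = "{a\<in>V. d k a = s}"
  have vanish: "u k t * u a q = 0" if "t \<in> V" "a \<in> V" "d t q = s \<longleftrightarrow> d k a \<noteq> s" for t a
    using that k q mult_eq_zero_if_gdist_differs by metis
  have "(\<Sum>t\<in>?T. u k t) = (\<Sum>t\<in>?T. \<Sum>a\<in>V. u k t * u a q)"
    by (simp add: column_sum[OF q] flip: sum_distrib_left)
  also have "\<dots> = (\<Sum>t\<in>?T. \<Sum>a\<in>?A. u k t * u a q)"
    using vanish by (intro sum.cong refl sum.mono_neutral_right) auto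
  also have "\<dots> = (\<Sum>a\<in>?A. \<Sum>t\<in>?T. u k t * u a q)"
    by (rule sum.swap)
  also have "\<dots> = (\<Sum>a\<in>?A. \<Sum>t\<in>V. u k t * u a q)"
    using vanish by (intro sum.cong refl sum.mono_neutral_left) auto
  also have "\<dots> = (\<Sum>a\<in>?A. u a q)"
    by (simp add: row_sum[OF k] flip: sum_distrib_right)
  finally show ?thesis .
qed

lemma sandwich_eq_zero_off_spheres:
  assumes "i \<in> V" "j \<in> V" "k \<in> V" "p \<in> V" "t \<in> V"
    and "\<not> (d t j = d i k \<and> d t p = d i k)"
  shows "u i j * u k t * u i p = 0"
proof (cases "d t j = d i k")
  case True
  then have "d k i \<noteq> d t p"
    using assms gdist_commute by auto
  then show ?thesis
    using mult_eq_zero_if_gdist_differs assms by (simp add: mult.assoc)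
next
  case False
  then have "d i k \<noteq> d j t"
    using assms gdist_commute by auto
  then show ?thesis
    using mult_eq_zero_if_gdist_differs assms by simp
qed

lemma sandwich_eq_zero_if_gdist_differs:
  assumes "i \<in> V" "j \<in> V" "a \<in> V" "q \<in> V" "p \<in> V" and "d j q \<noteq> d q p"
  shows "u i j * u a q * u i p = 0"
proof (cases "d i a = d j q")
  case True
  then have "d a i \<noteq> d q p"
    using assms gdist_commute by auto
  then show ?thesis
    using mult_eq_zero_if_gdist_differs assms by (simp add: mult.assoc)
next
  case False
  then show ?thesis
    using mult_eq_zero_if_gdist_differs assms by simp
qed

lemma sandwich_sum_eq_zero:
  assumes V: "i \<in> V" "j \<in> V" "k \<in> V" "p \<in> V" "q \<in> V" and jqp: "d j q \<noteq> d q p"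
  shows "u i j * (\<Sum>t\<in>{t\<in>V. d t j = d i k \<and> d t p = d i k \<and> d t q = s}. u k t) * u i p = 0"
proof -
  have "u i j * (\<Sum>t\<in>{t\<in>V. d t j = d i k \<and> d t p = d i k \<and> d t q = s}. u k t) * u i p
      = (\<Sum>t\<in>{t\<in>V. d t j = d i k \<and> d t p = d i k \<and> d t q = s}. u i j * u k t * u i p)"
    by (simp add: sum_distrib_left sum_distrib_right)
  also have "\<dots> = (\<Sum>t\<in>{t\<in>V. d t q = s}. u i j * u k t * u i p)"
    using V by (intro sum.mono_neutral_left) (auto intro!: sandwich_eq_zero_off_spheres)
  also have "\<dots> = u i j * (\<Sum>a\<in>{a\<in>V. d k a = s}. u a q) * u i p"
    using V by (simp add: sum_distrib_left sum_distrib_right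
        flip: sum_row_sphere_eq_sum_column_sphere)
  also have "\<dots> = (\<Sum>a\<in>{a\<in>V. d k a = s}. u i j * u a q * u i p)"
    by (simp add: sum_distrib_left sum_distrib_right)
  also have "\<dots> = 0"
    using sandwich_eq_zero_if_gdist_differs V jqp by (intro sum.neutral) auto
  finally show ?thesis .
qed

end

theorem lemma3p7:
  fixes n :: nat and E :: "nat \<Rightarrow> nat \<Rightarrow> bool"
    and u :: "nat \<Rightarrow> nat \<Rightarrow> 'a::cstar_algebra"
    and i j k l p q m s :: nat
  assumes "simple_connected_graph n E"
    and "qaut_relations n E u"
    and "i \<in> vertices n" "j \<in> vertices n" "k \<in> vertices n" "l \<in> vertices n"
    and "p \<in> vertices n" "q \<in> vertices n"
    and "gdist n E i k = m" "gdist n E j l = m"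
    and "p \<noteq> j" "gdist n E p l = m"
    and "gdist n E q l = s" "gdist n E j q \<noteq> gdist n E q p"
  shows "u i j * (\<Sum>t\<in>{t\<in>vertices n. gdist n E t j = m \<and> gdist n E t p = m \<and> gdist n E t q = s}. u k t) * u i p = 0
     \<and> ({t\<in>vertices n. gdist n E t q = s \<and> gdist n E t j = m \<and> gdist n E t p = m} = {l}
          \<longrightarrow> u i j * u k l * u i p = 0)"
proof -
  \<comment> \<open>Only m = d(i,k) and d(j,q) \<noteq> d(q,p) are used.\<close>
  interpret quantum_automorphism n E u
    using assms(1,2) by unfold_locales
  have "u i j * (\<Sum>t\<in>{t\<in>V. d t j = m \<and> d t p = m \<and> d t q = s}. u k t) * u i p = 0"
    using sandwich_sum_eq_zero[of i j k p q s] assms(3-8,14) unfolding assms(9) by blast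
  moreover have "{t\<in>V. d t q = s \<and> d t j = m \<and> d t p = m} = {t\<in>V. d t j = m \<and> d t p = m \<and> d t q = s}"
    by blast
  ultimately show ?thesis
    by auto
qed

end
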